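(* Let $q$ be an odd prime power and $n\ge1$ an integer with $\gcd(n+1,q)=1$. If $q>2n$, then there exists $a\in\mathbb{F}_q$ such that $C_n(a)$ is LCD.
   Context: For $a\in\mathbb{F}_q$ and $n \ge 1$, $T_n(a)$ denotes the $n\times n$ symmetric tridiagonal Toeplitz matrix over $\mathbb{F}_q$ with all diagonal entries equal to $a$, all entries on the first super- and sub-diagonals equal to $1$, and all other entries $0$. $C_n(a)$ is the $[2n,n]$ linear code over $\mathbb{F}_q$ with generator matrix $[I_n \mid T_n(a)]$. A linear code $C$ is LCD if $C\cap C^\perp=\{0\}$ (Euclidean dual). *)

theory Defs
  imports Main "HOL-Computational_Algebra.Primes"
begin

text \<open>Vectors of length N over a field are modelled as functions nat => 'a
  vanishing outside {..<N}; matrices as functions nat => nat => 'a read on the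
  relevant index ranges.\<close>

definition vecs :: "nat \<Rightarrow> (nat \<Rightarrow> 'a::zero) set" where
  "vecs N = {v. \<forall>j\<ge>N. v j = 0}"

definition inner_prod :: "nat \<Rightarrow> (nat \<Rightarrow> 'a::comm_ring_1) \<Rightarrow> (nat \<Rightarrow> 'a) \<Rightarrow> 'a" where
  "inner_prod N u v = (\<Sum>j<N. u j * v j)"

definition row_code :: "nat \<Rightarrow> nat \<Rightarrow> (nat \<Rightarrow> nat \<Rightarrow> 'a::comm_ring_1) \<Rightarrow> (nat \<Rightarrow> 'a) set" where
  "row_code k N G = {v. \<exists>c. v = (\<lambda>j. if j < N then (\<Sum>i<k. c i * G i j) else 0)}"

definition dual_code :: "nat \<Rightarrow> (nat \<Rightarrow> 'a::comm_ring_1) set \<Rightarrow> (nat \<Rightarrow> 'a) set" where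
  "dual_code N C = {v \<in> vecs N. \<forall>u\<in>C. inner_prod N u v = 0}"

definition is_LCD :: "nat \<Rightarrow> (nat \<Rightarrow> 'a::comm_ring_1) set \<Rightarrow> bool" where
  "is_LCD N C \<longleftrightarrow> C \<inter> dual_code N C = {(\<lambda>_. 0)}"

definition tridiag :: "nat \<Rightarrow> 'a::comm_ring_1 \<Rightarrow> nat \<Rightarrow> nat \<Rightarrow> 'a" where
  "tridiag n a i j = (if i < n \<and> j < n then
      (if i = j then a else if i = j + 1 \<or> j = i + 1 then 1 else 0) else 0)"

definition gen_matrix :: "nat \<Rightarrow> 'a::comm_ring_1 \<Rightarrow> nat \<Rightarrow> nat \<Rightarrow> 'a" where
  "gen_matrix n a i j = (if j < n then (if i = j then 1 else 0) else tridiag n a i (j - n))"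

definition C_code :: "nat \<Rightarrow> 'a::comm_ring_1 \<Rightarrow> (nat \<Rightarrow> 'a) set" where
  "C_code n a = row_code n (2 * n) (gen_matrix n a)"

end

theory Submission
  imports Defs "Jordan_Normal_Form.Char_Poly"
begin

text \<open>The codewords of C_n(a) are the pairs (c, T c) with T = T_n(a) symmetric, so
  (c, T c) \<bullet> (d, T d) = c \<bullet> (I + T^2) d, and C_n(a) can fail to be LCD only if I + T^2 is
  singular. Writing T = S + aI with S = T_n(0) and I + T^2 = (T + iI)(T - iI) for a square root i
  of -1, this makes -a an eigenvalue of the 2n \<times> 2n matrix [[S, -I], [I, S]], which does not
  depend on a. Hence at most 2n elements a are bad, and q > 2n leaves a good one.\<close>

definition tridiag_mat :: "nat \<Rightarrow> 'a::comm_ring_1 \<Rightarrow> 'a mat" where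
  "tridiag_mat n a = mat n n (\<lambda>(i, j). tridiag n a i j)"

lemma tridiag_mat_carrier [simp]: "tridiag_mat n a \<in> carrier_mat n n"
  by (simp add: tridiag_mat_def)

lemma dim_tridiag_mat [simp]:
  "dim_row (tridiag_mat n a) = n" "dim_col (tridiag_mat n a) = n"
  by (simp_all add: tridiag_mat_def)

lemma transpose_tridiag_mat [simp]: "transpose_mat (tridiag_mat n a) = tridiag_mat n a"
  by (rule eq_matI) (auto simp: tridiag_mat_def tridiag_def)

lemma index_tridiag_mat_mult_vec_shift:
  assumes "x \<in> carrier_vec n" and "i < n"
  shows "(tridiag_mat n a *\<^sub>v x) $ i = (tridiag_mat n 0 *\<^sub>v x) $ i + a * x $ i"
proof -
  have "(tridiag_mat n a *\<^sub>v x) $ i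
      = (\<Sum>j<n. tridiag n 0 i j * x $ j + (if j = i then a * x $ i else 0))"
    using assms by (auto simp: tridiag_mat_def scalar_prod_def lessThan_atLeast0 tridiag_def
        intro!: sum.cong)
  also have "\<dots> = (tridiag_mat n 0 *\<^sub>v x) $ i + a * x $ i"
    using assms by (simp add: sum.distrib tridiag_mat_def scalar_prod_def lessThan_atLeast0)
  finally show ?thesis .
qed

definition codeword :: "nat \<Rightarrow> 'a::comm_ring_1 \<Rightarrow> 'a vec \<Rightarrow> nat \<Rightarrow> 'a" where
  "codeword n a c j = (if j < 2 * n then (c @\<^sub>v (tridiag_mat n a *\<^sub>v c)) $ j else 0)"

lemma codeword_zero [simp]: "codeword n a (0\<^sub>v n) = (\<lambda>_. 0)"
  by (rule ext) (simp add: codeword_def scalar_prod_def)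

lemma gen_matrix_combination:
  assumes "j < 2 * n"
  shows "(\<Sum>i<n. c i * gen_matrix n a i j) = (vec n c @\<^sub>v (tridiag_mat n a *\<^sub>v vec n c)) $ j"
proof (cases "j < n")
  case True
  then have "(\<Sum>i<n. c i * gen_matrix n a i j) = (\<Sum>i<n. if i = j then c j else 0)"
    by (intro sum.cong) (auto simp: gen_matrix_def)
  with True show ?thesis by simp
next
  case False
  then have "(\<Sum>i<n. c i * gen_matrix n a i j) = (\<Sum>i<n. tridiag n a (j - n) i * c i)"
    by (intro sum.cong) (auto simp: gen_matrix_def tridiag_def)
  with False assms show ?thesis
    by (simp add: tridiag_mat_def scalar_prod_def lessThan_atLeast0)
qed

lemma C_code_eq: "C_code n a = codeword n a ` carrier_vec n"
proof -
  have "(\<lambda>j. if j < 2 * n then \<Sum>i<n. c i * gen_matrix n a i j else 0) = codeword n a (vec n c)"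
    for c by (rule ext) (simp add: codeword_def gen_matrix_combination)
  then have "C_code n a = range (\<lambda>c. codeword n a (vec n c))"
    unfolding C_code_def row_code_def by (simp only: full_SetCompr_eq)
  also have "\<dots> = codeword n a ` carrier_vec n"
  proof -
    have "range (vec n) = (carrier_vec n :: 'a vec set)"
    proof (intro equalityI subsetI)
      show "x \<in> carrier_vec n" if "x \<in> range (vec n)" for x
        using that by auto
      show "x \<in> range (vec n)" if "x \<in> carrier_vec n" for x :: "'a vec"
      proof (rule range_eqI)
        show "x = vec n (($) x)" using that by (intro eq_vecI) auto
      qed
    qed
    then show ?thesis by (simp add: image_image[symmetric])
  qed
  finally show ?thesis .
qed

lemma vec_codeword:
  assumes "c \<in> carrier_vec n"
  shows "vec (2 * n) (codeword n a c) = c @\<^sub>v (tridiag_mat n a *\<^sub>v c)"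
  using assms by (intro eq_vecI) (auto simp: codeword_def)

lemma inner_prod_eq_scalar_prod: "inner_prod N u v = vec N u \<bullet> vec N v"
  by (simp add: inner_prod_def scalar_prod_def lessThan_atLeast0)

lemma inner_prod_codeword:
  assumes c: "c \<in> carrier_vec n" and d: "d \<in> carrier_vec n"
  shows "inner_prod (2 * n) (codeword n a c) (codeword n a d)
    = c \<bullet> (d + tridiag_mat n a *\<^sub>v (tridiag_mat n a *\<^sub>v d))"
proof -
  let ?T = "tridiag_mat n a"
  have "inner_prod (2 * n) (codeword n a c) (codeword n a d)
      = c \<bullet> d + (?T *\<^sub>v c) \<bullet> (?T *\<^sub>v d)"
    unfolding inner_prod_eq_scalar_prod vec_codeword[OF c] vec_codeword[OF d]
    by (rule scalar_prod_append[of _ n _ n]) (use c d in \<open>simp_all add: mult_mat_vec_carrier[of _ n n]\<close>)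
  also have "(?T *\<^sub>v c) \<bullet> (?T *\<^sub>v d) = c \<bullet> (?T *\<^sub>v (?T *\<^sub>v d))"
    using transpose_vec_mult_scalar[of ?T n n "?T *\<^sub>v d" c] c d
      mult_mat_vec_carrier[OF tridiag_mat_carrier d] by simp
  finally show ?thesis
    using c d by (simp add: scalar_prod_add_distrib[of _ n] mult_mat_vec_carrier[of _ n n])
qed

lemma kernel_vector_of_not_LCD:
  fixes a :: "'a::comm_ring_1"
  assumes "\<not> is_LCD (2 * n) (C_code n a)"
  obtains d where "d \<in> carrier_vec n" "d \<noteq> 0\<^sub>v n"
    "d + tridiag_mat n a *\<^sub>v (tridiag_mat n a *\<^sub>v d) = 0\<^sub>v n"
proof -
  let ?T = "tridiag_mat n a"
  have "(\<lambda>_. 0) \<in> C_code n a"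
    unfolding C_code_eq by (rule image_eqI[where x = "0\<^sub>v n"]) simp_all
  moreover have "(\<lambda>_. 0) \<in> dual_code (2 * n) (C_code n a)"
    by (simp add: dual_code_def vecs_def inner_prod_def)
  ultimately obtain v where v: "v \<in> C_code n a" "v \<in> dual_code (2 * n) (C_code n a)"
    and v_nz: "v \<noteq> (\<lambda>_. 0)"
    using assms unfolding is_LCD_def by blast
  then obtain d where d: "d \<in> carrier_vec n" and v_eq: "v = codeword n a d"
    unfolding C_code_eq by blast
  have "(d + ?T *\<^sub>v (?T *\<^sub>v d)) $ k = 0" if k: "k < n" for k
  proof -
    have "codeword n a (unit_vec n k) \<in> C_code n a"
      unfolding C_code_eq by simp
    with v(2) have "inner_prod (2 * n) (codeword n a (unit_vec n k)) v = 0"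
      by (simp add: dual_code_def)
    then show ?thesis
      using d k by (simp add: v_eq inner_prod_codeword mult_mat_vec_carrier[of _ n n])
  qed
  then have "d + ?T *\<^sub>v (?T *\<^sub>v d) = 0\<^sub>v n"
    by (intro eq_vecI) (use d in auto)
  moreover have "d \<noteq> 0\<^sub>v n"
    using v_nz v_eq codeword_zero by blast
  ultimately show ?thesis
    using d that by blast
qed

text \<open>[[S, -I], [I, S]] with S = T_n(0): the real form of S + iI, where i^2 = -1.\<close>
definition tridiag_block_mat :: "nat \<Rightarrow> 'a::comm_ring_1 mat" where
  "tridiag_block_mat n = four_block_mat (tridiag_mat n 0) (- 1\<^sub>m n) (1\<^sub>m n) (tridiag_mat n 0)"

lemma tridiag_block_mat_carrier: "tridiag_block_mat n \<in> carrier_mat (2 * n) (2 * n)"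
  by (simp add: tridiag_block_mat_def mult_2)

lemma dim_row_tridiag_block_mat [simp]: "dim_row (tridiag_block_mat n) = 2 * n"
  by (simp add: tridiag_block_mat_def mult_2)

lemma eigenvalue_tridiag_block_mat:
  fixes a :: "'a::comm_ring_1"
  assumes d: "d \<in> carrier_vec n" and d_nz: "d \<noteq> 0\<^sub>v n"
    and ker: "d + tridiag_mat n a *\<^sub>v (tridiag_mat n a *\<^sub>v d) = 0\<^sub>v n"
  shows "eigenvalue (tridiag_block_mat n) (- a)"
proof -
  let ?T = "tridiag_mat n a" and ?S = "tridiag_mat n 0"
  define w where "w = d @\<^sub>v (?T *\<^sub>v d)"
  have Td: "?T *\<^sub>v d \<in> carrier_vec n"
    using d by (simp add: mult_mat_vec_carrier[of _ n n])
  have TTd: "(?T *\<^sub>v (?T *\<^sub>v d)) $ i = - d $ i" if "i < n" for i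
    using arg_cong[OF ker, of "\<lambda>x. x $ i"] that d Td by (simp add: eq_neg_iff_add_eq_0 add.commute)
  have "tridiag_block_mat n *\<^sub>v w
      = (?S *\<^sub>v d + - 1\<^sub>m n *\<^sub>v (?T *\<^sub>v d)) @\<^sub>v (1\<^sub>m n *\<^sub>v d + ?S *\<^sub>v (?T *\<^sub>v d))"
    unfolding tridiag_block_mat_def w_def
    by (rule four_block_mat_mult_vec) (use d Td in auto)
  also have "\<dots> = (- a) \<cdot>\<^sub>v w" (is "?l = ?r")
  proof (rule eq_vecI)
    fix i assume "i < dim_vec ?r"
    then have i: "i < n + n" using d Td by (simp add: w_def)
    show "?l $ i = ?r $ i"
    proof (cases "i < n")
      case True
      have "?l $ i = (?S *\<^sub>v d) $ i - (?T *\<^sub>v d) $ i"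
        using True d Td by (simp del: index_mult_mat_vec)
      also have "\<dots> = ?r $ i"
        using True d by (simp add: index_tridiag_mat_mult_vec_shift[of _ n _ a] w_def
            del: index_mult_mat_vec)
      finally show ?thesis .
    next
      case False
      define j where "j = i - n"
      have j: "j < n" "i = n + j"
        using False i by (simp_all add: j_def)
      have "?l $ i = d $ j + (?S *\<^sub>v (?T *\<^sub>v d)) $ j"
        using j d Td by (simp del: index_mult_mat_vec)
      also have "\<dots> = d $ j + (?T *\<^sub>v (?T *\<^sub>v d)) $ j - a * (?T *\<^sub>v d) $ j"
        using index_tridiag_mat_mult_vec_shift[OF Td j(1), of a] by simp
      also have "\<dots> = - a * (?T *\<^sub>v d) $ j"
        using TTd[OF j(1)] by simp
      also have "\<dots> = ?r $ i"
        using j d Td by (simp add: w_def del: index_mult_mat_vec)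
      finally show ?thesis .
    qed
  qed (use d Td in \<open>simp add: w_def\<close>)
  finally have "tridiag_block_mat n *\<^sub>v w = (- a) \<cdot>\<^sub>v w" .
  moreover have "w \<in> carrier_vec (dim_row (tridiag_block_mat n :: 'a mat))"
    using d Td by (simp add: w_def mult_2)
  moreover have "w \<noteq> 0\<^sub>v (dim_row (tridiag_block_mat n :: 'a mat))"
  proof
    assume w0: "w = 0\<^sub>v (dim_row (tridiag_block_mat n :: 'a mat))"
    have "d $ i = 0" if "i < n" for i
      using arg_cong[OF w0, of "\<lambda>x. x $ i"] that d Td by (simp add: w_def del: index_mult_mat_vec)
    with d d_nz show False by (auto simp: vec_eq_iff)
  qed
  ultimately show ?thesis
    unfolding eigenvalue_def eigenvector_def by blast
qed

lemma eigenvalues_finite_card: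
  fixes A :: "'a::field mat"
  assumes A: "A \<in> carrier_mat N N"
  shows "finite {x. eigenvalue A x}" "card {x. eigenvalue A x} \<le> N"
proof -
  have eig: "{x. eigenvalue A x} = {x. poly (char_poly A) x = 0}"
    using eigenvalue_root_char_poly[OF A] by blast
  have "degree (char_poly A) = N" "char_poly A \<noteq> 0"
    using degree_monic_char_poly[OF A] by auto
  then show "finite {x. eigenvalue A x}" "card {x. eigenvalue A x} \<le> N"
    unfolding eig using poly_roots_finite card_poly_roots_bound by metis+
qed

lemma card_not_LCD_le: "card {a :: 'a::field. \<not> is_LCD (2 * n) (C_code n a)} \<le> 2 * n"
proof -
  let ?E = "{x :: 'a. eigenvalue (tridiag_block_mat n) x}"
  have fin: "finite ?E"
    by (rule eigenvalues_finite_card(1)[OF tridiag_block_mat_carrier])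
  have sub: "{a. \<not> is_LCD (2 * n) (C_code n a)} \<subseteq> uminus ` ?E"
  proof
    fix a :: 'a
    assume "a \<in> {a. \<not> is_LCD (2 * n) (C_code n a)}"
    then obtain d where "d \<in> carrier_vec n" "d \<noteq> 0\<^sub>v n"
      "d + tridiag_mat n a *\<^sub>v (tridiag_mat n a *\<^sub>v d) = 0\<^sub>v n"
      using kernel_vector_of_not_LCD by blast
    then have "- a \<in> ?E"
      by (simp add: eigenvalue_tridiag_block_mat)
    then show "a \<in> uminus ` ?E"
      by (rule rev_image_eqI) simp
  qed
  have "card {a :: 'a. \<not> is_LCD (2 * n) (C_code n a)} \<le> card (uminus ` ?E)"
    by (rule card_mono[OF finite_imageI[OF fin] sub])
  also have "\<dots> \<le> card ?E"
    using fin by (rule card_image_le)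
  also have "\<dots> \<le> 2 * n"
    by (rule eigenvalues_finite_card(2)[OF tridiag_block_mat_carrier])
  finally show ?thesis .
qed

theorem corollary2p2:
  fixes q n :: nat
  assumes card: "card (UNIV :: 'a::{finite,field} set) = q"
    and q_odd: "odd q"
    and pp: "\<exists>p k. prime p \<and> k \<ge> 1 \<and> q = p ^ k"
    and n_pos: "n \<ge> 1"
    and cop: "gcd (n + 1) q = 1"
    and big: "q > 2 * n"
  shows "\<exists>a::'a. is_LCD (2 * n) (C_code n a)"
proof (rule ccontr)
  assume "\<not> (\<exists>a::'a. is_LCD (2 * n) (C_code n a))"
  then have "{a :: 'a. \<not> is_LCD (2 * n) (C_code n a)} = UNIV"
    by blast
  moreover have "card {a :: 'a. \<not> is_LCD (2 * n) (C_code n a)} \<le> 2 * n"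
    by (rule card_not_LCD_le)
  ultimately have "q \<le> 2 * n"
    using card by simp
  with big show False
    by simp
qed

end
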